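(* Let $n\ge 2$, $d\ge1$, $r\ge1$ be integers with $n\ge d$ and $dr\equiv0\pmod n$. Then $Q_n^-(d,r)\cong Q_n(d,r)$.
   Context: $\mathbb{Z}_2^n=\{0,1\}^n$ with coordinatewise addition mod 2; $e_i$ is the $i$-th standard basis vector, subscripts read modulo $n$. The recursive cube of rings $Q_n(d,r)$ (for $n\ge d$, $dr\equiv0\pmod n$) is the simple graph with vertex set $\mathbb{Z}_2^n\times\mathbb{Z}_r$ in which $(a,x)$ is adjacent to $(a+e_{i+dx},x)$ for $1\le i\le d$ and to $(a,x\pm1)$. The general recursive cube of rings $Q_n^-(d,r)$ is the simple graph with vertex set $\mathbb{Z}_2^n\times\{0,1,\dots,r-1\}$ in which $(a,x)$ and $(b,y)$ are adjacent iff either $a=b$ and $x\equiv y\pm1\pmod r$, or $x=y$ and $b=a+e_{i-dx}$ for some $1\le i\le d$. *)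

theory Defs
  imports Main
begin

text \<open>Elements of Z_2^n are represented as subsets of the coordinate set {0..<n}
  (coordinate k is 1 iff k is in the set); addition of the unit vector e_k is
  toggling coordinate k, with subscripts read modulo n. Elements of Z_r are
  represented by their residues 0..r-1.\<close>

definition flip :: "int set \<Rightarrow> int \<Rightarrow> int set" where
  "flip a k = (if k \<in> a then a - {k} else insert k a)"

definition unit_add :: "nat \<Rightarrow> int set \<Rightarrow> int \<Rightarrow> int set" where
  "unit_add n a i = flip a (i mod int n)"

definition cube_verts :: "nat \<Rightarrow> nat \<Rightarrow> (int set \<times> int) set" where
  "cube_verts n r = {(a, x). a \<subseteq> {0..<int n} \<and> 0 \<le> x \<and> x < int r}"

text \<open>Recursive cube of rings Q_n(d,r).\<close>
definition RCR_adj :: "nat \<Rightarrow> nat \<Rightarrow> nat \<Rightarrow> (int set \<times> int) \<Rightarrow> (int set \<times> int) \<Rightarrow> bool" where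
  "RCR_adj n d r u v \<longleftrightarrow> u \<noteq> v \<and>
     (let (a, x) = u; (b, y) = v in
       (x = y \<and> (\<exists>i\<in>{1..int d}. b = unit_add n a (i + int d * x))) \<or>
       (a = b \<and> (y = (x + 1) mod int r \<or> y = (x - 1) mod int r)))"

text \<open>General recursive cube of rings Q_n^-(d,r).\<close>
definition GRCR_adj :: "nat \<Rightarrow> nat \<Rightarrow> nat \<Rightarrow> (int set \<times> int) \<Rightarrow> (int set \<times> int) \<Rightarrow> bool" where
  "GRCR_adj n d r u v \<longleftrightarrow> u \<noteq> v \<and>
     (let (a, x) = u; (b, y) = v in
       (a = b \<and> (x mod int r = (y + 1) mod int r \<or> x mod int r = (y - 1) mod int r)) \<or>
       (x = y \<and> (\<exists>i\<in>{1..int d}. b = unit_add n a (i - int d * x))))"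

definition graph_iso :: "'a set \<Rightarrow> ('a \<Rightarrow> 'a \<Rightarrow> bool) \<Rightarrow> 'b set \<Rightarrow> ('b \<Rightarrow> 'b \<Rightarrow> bool) \<Rightarrow> bool" where
  "graph_iso V1 E1 V2 E2 \<longleftrightarrow>
     (\<exists>f. bij_betw f V1 V2 \<and> (\<forall>u\<in>V1. \<forall>v\<in>V1. E1 u v \<longleftrightarrow> E2 (f u) (f v)))"

end

theory Submission
  imports Defs
begin

text \<open>The reflection \<open>(a, x) \<mapsto> (a, -x mod r)\<close> of the ring coordinate is an isomorphism
  \<open>Q\<^sub>n\<^sup>-(d,r) \<cong> Q\<^sub>n(d,r)\<close>. It preserves ring adjacency, since negation turns
  \<open>x \<equiv> y \<plusminus> 1\<close> into \<open>-y \<equiv> -x \<plusminus> 1\<close>. It also preserves cube adjacency: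
  \<open>-x mod r\<close> differs from \<open>-x\<close> by a multiple of \<open>r\<close>, so \<open>d (-x mod r)\<close> differs
  from \<open>-d x\<close> by a multiple of \<open>d r\<close>, hence of \<open>n\<close>, and the flipped coordinates
  \<open>i - d x\<close> and \<open>i + d (-x mod r)\<close> agree modulo \<open>n\<close>.\<close>

lemma neg_mod_add_eq_iff:
  fixes x y c r :: int
  shows "(-y) mod r = ((-x) mod r + c) mod r \<longleftrightarrow> x mod r = (y + c) mod r"
proof -
  have "(-y) mod r = ((-x) mod r + c) mod r \<longleftrightarrow> (-y) mod r = (-x + c) mod r"
    by (simp add: mod_add_left_eq)
  also have "\<dots> \<longleftrightarrow> r dvd x - (y + c)"
    by (simp add: mod_eq_dvd_iff algebra_simps)
  also have "\<dots> \<longleftrightarrow> x mod r = (y + c) mod r"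
    by (simp add: mod_eq_dvd_iff)
  finally show ?thesis .
qed

lemma neg_mod_eq_iff:
  fixes x y r :: int
  assumes "0 \<le> x" "x < r" "0 \<le> y" "y < r"
  shows "(-x) mod r = (-y) mod r \<longleftrightarrow> x = y"
proof
  assume "(-x) mod r = (-y) mod r"
  then have "x mod r = y mod r"
    by (metis mod_minus_eq minus_minus)
  then show "x = y"
    using assms by simp
qed simp

lemma unit_add_reflect_level:
  fixes i x :: int
  assumes "n dvd d * r"
  shows "unit_add n a (i - int d * x) = unit_add n a (i + int d * ((-x) mod int r))"
proof -
  have "(x + (-x) mod int r) mod int r = 0"
    by (simp add: mod_add_right_eq)
  then have "int d * int r dvd int d * (x + (-x) mod int r)"
    by (simp add: mod_0_imp_dvd)
  moreover have "int n dvd int d * int r"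
    using assms by (metis of_nat_dvd_iff of_nat_mult)
  ultimately have "int n dvd int d * (x + (-x) mod int r)"
    by (rule dvd_trans[rotated])
  moreover have "(i - int d * x) - (i + int d * ((-x) mod int r)) = - (int d * (x + (-x) mod int r))"
    by (simp add: algebra_simps)
  ultimately have "int n dvd (i - int d * x) - (i + int d * ((-x) mod int r))"
    by simp
  then have "(i - int d * x) mod int n = (i + int d * ((-x) mod int r)) mod int n"
    by (simp only: mod_eq_dvd_iff)
  then show ?thesis
    unfolding unit_add_def by (rule arg_cong)
qed

definition ring_reflect :: "nat \<Rightarrow> int set \<times> int \<Rightarrow> int set \<times> int" where
  "ring_reflect r = (\<lambda>(a, x). (a, (-x) mod int r))"

lemma ring_reflect_in_cube_verts:
  assumes "r \<ge> 1" and "u \<in> cube_verts n r"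
  shows "ring_reflect r u \<in> cube_verts n r"
  using assms by (auto simp: ring_reflect_def cube_verts_def)

lemma ring_reflect_ring_reflect:
  assumes "u \<in> cube_verts n r"
  shows "ring_reflect r (ring_reflect r u) = u"
  using assms by (auto simp: ring_reflect_def cube_verts_def mod_minus_eq)

lemma bij_betw_ring_reflect:
  assumes "r \<ge> 1"
  shows "bij_betw (ring_reflect r) (cube_verts n r) (cube_verts n r)"
  by (rule bij_betw_byWitness[where f' = "ring_reflect r"])
    (use assms ring_reflect_in_cube_verts ring_reflect_ring_reflect in auto)

lemma GRCR_adj_iff_RCR_adj_ring_reflect:
  assumes "n dvd d * r"
    and u: "u \<in> cube_verts n r" and v: "v \<in> cube_verts n r"
  shows "GRCR_adj n d r u v \<longleftrightarrow> RCR_adj n d r (ring_reflect r u) (ring_reflect r v)"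
proof -
  obtain a x b y where uv: "u = (a, x)" "v = (b, y)"
    by fastforce
  have distinct: "u \<noteq> v \<longleftrightarrow> ring_reflect r u \<noteq> ring_reflect r v"
    using u v ring_reflect_ring_reflect by metis
  have same_level: "(-x) mod int r = (-y) mod int r \<longleftrightarrow> x = y"
    using u v by (intro neg_mod_eq_iff) (auto simp: uv cube_verts_def)
  show ?thesis
    using distinct same_level unit_add_reflect_level[OF assms(1), of a _ x]
      neg_mod_add_eq_iff[of y "int r" x 1] neg_mod_add_eq_iff[of y "int r" x "-1"]
    by (auto simp: GRCR_adj_def RCR_adj_def ring_reflect_def uv)
qed

theorem mainTheorem4:
  fixes n d r :: nat
  assumes "n \<ge> 2" and "d \<ge> 1" and "r \<ge> 1" and "n \<ge> d" and "(d * r) mod n = 0"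
  shows "graph_iso (cube_verts n r) (GRCR_adj n d r) (cube_verts n r) (RCR_adj n d r)"
proof -
  have "n dvd d * r"
    using assms(5) by auto
  then show ?thesis
    unfolding graph_iso_def
    using bij_betw_ring_reflect[OF assms(3)] GRCR_adj_iff_RCR_adj_ring_reflect by blast
qed

end
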